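(* Let $I=(N,A,V)$ be an instance with three agents $N=\{1,2,3\}$, binary valuations ($V_i(j,a)\in\{0,1\}$) satisfying the no-chore assumption ($V_i(i,a)\ge V_i(j,a)$ for all $i,j,a$). Let $\pi$ be an EF1 complete allocation of $I$ such that for every pair $i,j\in N$, if $\Delta_{ij}(\pi)=-1$ then $\Delta_{ji}(\pi)\ge 0$. Let $a\notin A$ be a new item (with binary, no-chore values $V_i(j,a)$) for which there is an agent $i\in N$ with $\Delta_{ij}(a)=0$ for all $j\in N$. Then the instance $I'=(N,A\cup\{a\},V)$ admits an EF1 complete allocation.
   Context: An allocation $\pi=(\pi_1,\pi_2,\pi_3)$ consists of pairwise disjoint bundles (complete if they cover the item set); $\pi(a)$ is the agent receiving $a$; $V_i(j,a)$ is agent $i$'s value when item $a$ goes to $j$; $V_i(\pi)=\sum_{a\text{ assigned in }\pi}V_i(\pi(a),a)$; $\pi^{i\leftrightarrow j}$ swaps bundles of $i$ and $j$. A complete allocation $\pi$ is EF1 if for all $i,j$ there exist $C$ with $|C|\le1$ and the allocation $\lambda$ with $\lambda_\ell=\pi_\ell\setminus C$ for all $\ell$ such that $V_i(\lambda)\ge V_i(\lambda^{i\leftrightarrow j})$. $\Delta_{ij}(a)=V_i(i,a)-V_i(j,a)$, $\Delta_{ij}(S)=\sum_{a\in S}\Delta_{ij}(a)$ for a set $S$, and $\Delta_{ij}(\pi)=\Delta_{ij}(\pi_i)-\Delta_{ij}(\pi_j)$. *)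

theory Defs
  imports Complex_Main
begin

text \<open>Agents are natural numbers from a set N; items have type 'a.
  A valuation V i j a is agent i's value when item a goes to agent j.
  An allocation is a function pi from agents to bundles (item sets).\<close>

definition is_allocation :: "nat set \<Rightarrow> 'a set \<Rightarrow> (nat \<Rightarrow> 'a set) \<Rightarrow> bool" where
  "is_allocation N A \<pi> \<longleftrightarrow>
     (\<forall>i\<in>N. \<pi> i \<subseteq> A) \<and> (\<forall>i\<in>N. \<forall>j\<in>N. i \<noteq> j \<longrightarrow> \<pi> i \<inter> \<pi> j = {})"

definition is_complete_allocation :: "nat set \<Rightarrow> 'a set \<Rightarrow> (nat \<Rightarrow> 'a set) \<Rightarrow> bool" where
  "is_complete_allocation N A \<pi> \<longleftrightarrow> is_allocation N A \<pi> \<and> (\<Union>i\<in>N. \<pi> i) = A"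

definition alloc_val :: "nat set \<Rightarrow> (nat \<Rightarrow> nat \<Rightarrow> 'a \<Rightarrow> real) \<Rightarrow> nat \<Rightarrow> (nat \<Rightarrow> 'a set) \<Rightarrow> real" where
  "alloc_val N V i \<pi> = (\<Sum>j\<in>N. \<Sum>a\<in>\<pi> j. V i j a)"

definition swap_bundles :: "(nat \<Rightarrow> 'a set) \<Rightarrow> nat \<Rightarrow> nat \<Rightarrow> (nat \<Rightarrow> 'a set)" where
  "swap_bundles \<pi> i j = \<pi>(i := \<pi> j, j := \<pi> i)"

definition EF1 :: "nat set \<Rightarrow> (nat \<Rightarrow> nat \<Rightarrow> 'a \<Rightarrow> real) \<Rightarrow> (nat \<Rightarrow> 'a set) \<Rightarrow> bool" where
  "EF1 N V \<pi> \<longleftrightarrow> (\<forall>i\<in>N. \<forall>j\<in>N. \<exists>C. finite C \<and> card C \<le> 1 \<and>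
     (let lam = (\<lambda>l. \<pi> l - C) in alloc_val N V i lam \<ge> alloc_val N V i (swap_bundles lam i j)))"

definition Delta_item :: "(nat \<Rightarrow> nat \<Rightarrow> 'a \<Rightarrow> real) \<Rightarrow> nat \<Rightarrow> nat \<Rightarrow> 'a \<Rightarrow> real" where
  "Delta_item V i j a = V i i a - V i j a"

definition Delta_set :: "(nat \<Rightarrow> nat \<Rightarrow> 'a \<Rightarrow> real) \<Rightarrow> nat \<Rightarrow> nat \<Rightarrow> 'a set \<Rightarrow> real" where
  "Delta_set V i j S = (\<Sum>a\<in>S. Delta_item V i j a)"

definition Delta_alloc :: "(nat \<Rightarrow> nat \<Rightarrow> 'a \<Rightarrow> real) \<Rightarrow> nat \<Rightarrow> nat \<Rightarrow> (nat \<Rightarrow> 'a set) \<Rightarrow> real" where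
  "Delta_alloc V i j \<pi> = Delta_set V i j (\<pi> i) - Delta_set V i j (\<pi> j)"

end

(* With binary values and no chores every Delta_item is 0 or 1, so Delta_alloc is an integer and
   EF1 amounts to Delta_alloc V i j pi >= -1 for all i ~= j.  Giving the new item a to agent t
   raises Delta_alloc V t l, leaves the pairs not involving t alone and lowers Delta_alloc V k t
   by Delta_item V k t a.  So a can go to t unless some k objects, i.e. Delta_alloc V k t pi = -1
   and Delta_item V k t a = 1.  By the hypothesis on pi objection is asymmetric, and the agent
   indifferent about a objects to nobody; among three agents this leaves an agent to whom nobody
   objects. *)
theory Submission imports Defs begin

lemma alloc_val_minus_swap_bundles:
  assumes "finite N" "i \<in> N" "j \<in> N"
  shows "alloc_val N V i \<pi> - alloc_val N V i (swap_bundles \<pi> i j) = Delta_alloc V i j \<pi>"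
proof (cases "i = j")
  case False
  let ?f = "\<lambda>l. (\<Sum>b\<in>\<pi> l. V i l b) - (\<Sum>b\<in>swap_bundles \<pi> i j l. V i l b)"
  have "alloc_val N V i \<pi> - alloc_val N V i (swap_bundles \<pi> i j) = sum ?f N"
    by (simp add: alloc_val_def sum_subtractf)
  also have "\<dots> = sum ?f {i, j}"
    using assms by (intro sum.mono_neutral_right) (auto simp: swap_bundles_def)
  also have "\<dots> = Delta_alloc V i j \<pi>"
    using False
    by (simp add: swap_bundles_def Delta_alloc_def Delta_set_def Delta_item_def sum_subtractf)
  finally show ?thesis .
qed (simp add: swap_bundles_def Delta_alloc_def)

lemma Delta_item_binary_if_binary_no_chore:
  assumes binary: "\<forall>i\<in>N. \<forall>j\<in>N. \<forall>b\<in>B. V i j b \<in> {0, 1}"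
    and no_chore: "\<forall>i\<in>N. \<forall>j\<in>N. \<forall>b\<in>B. V i j b \<le> V i i b"
  shows "\<forall>i\<in>N. \<forall>j\<in>N. \<forall>b\<in>B. Delta_item V i j b \<in> {0, 1}"
proof (intro ballI)
  fix i j b assume ijb: "i \<in> N" "j \<in> N" "b \<in> B"
  then show "Delta_item V i j b \<in> {0, 1}"
    using binary[rule_format, OF ijb(1,1,3)] binary[rule_format, OF ijb] no_chore[rule_format, OF ijb]
    by (auto simp: Delta_item_def)
qed

lemma Delta_alloc_nonneg_if_gt_minus_one:
  assumes "\<forall>b\<in>\<pi> i \<union> \<pi> j. Delta_item V i j b \<in> \<int>" "-1 < Delta_alloc V i j \<pi>"
  shows "0 \<le> Delta_alloc V i j \<pi>"
proof -
  have "Delta_alloc V i j \<pi> \<in> \<int>"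
    using assms(1) unfolding Delta_alloc_def Delta_set_def by (intro Ints_diff Ints_sum) auto
  then obtain z where "Delta_alloc V i j \<pi> = of_int z" by (auto elim: Ints_cases)
  with assms(2) show ?thesis by simp
qed

lemma Delta_set_Diff_singleton_ge:
  assumes "finite S" "\<forall>b\<in>S. Delta_item V i j b \<le> 1"
  shows "Delta_set V i j S - 1 \<le> Delta_set V i j (S - {c})"
proof (cases "c \<in> S")
  case True
  then have "Delta_set V i j S = Delta_item V i j c + Delta_set V i j (S - {c})"
    using assms(1) by (simp add: Delta_set_def sum.remove)
  with True assms(2) show ?thesis by auto
qed simp

definition EF1_towards :: "nat set \<Rightarrow> (nat \<Rightarrow> nat \<Rightarrow> 'a \<Rightarrow> real) \<Rightarrow> (nat \<Rightarrow> 'a set) \<Rightarrow> nat \<Rightarrow> nat \<Rightarrow> bool" where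
  "EF1_towards N V \<pi> i j \<longleftrightarrow> (\<exists>C. finite C \<and> card C \<le> 1 \<and>
     alloc_val N V i (swap_bundles (\<lambda>l. \<pi> l - C) i j) \<le> alloc_val N V i (\<lambda>l. \<pi> l - C))"

lemma EF1_iff_EF1_towards: "EF1 N V \<pi> \<longleftrightarrow> (\<forall>i\<in>N. \<forall>j\<in>N. EF1_towards N V \<pi> i j)"
  by (simp add: EF1_def EF1_towards_def Let_def)

lemma EF1_towards_iff_removal:
  assumes "finite N" "i \<in> N" "j \<in> N"
  shows "EF1_towards N V \<pi> i j \<longleftrightarrow>
    (\<exists>C. finite C \<and> card C \<le> 1 \<and> 0 \<le> Delta_alloc V i j (\<lambda>l. \<pi> l - C))"
  unfolding EF1_towards_def
  using alloc_val_minus_swap_bundles[OF assms, of V] by (metis diff_ge_0_iff_ge)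

lemma EF1_towards_if_Delta_alloc_nonneg:
  assumes "finite N" "i \<in> N" "j \<in> N" "0 \<le> Delta_alloc V i j \<pi>"
  shows "EF1_towards N V \<pi> i j"
  unfolding EF1_towards_iff_removal[OF assms(1-3)] using assms(4)
  by (intro exI[of _ "{}"]) simp

lemma Delta_alloc_ge_minus_one_if_EF1_towards:
  assumes "EF1_towards N V \<pi> i j" "finite N" "i \<in> N" "j \<in> N" "finite (\<pi> i)" "finite (\<pi> j)"
    and "\<forall>b\<in>\<pi> i \<union> \<pi> j. 0 \<le> Delta_item V i j b \<and> Delta_item V i j b \<le> 1"
  shows "-1 \<le> Delta_alloc V i j \<pi>"
proof -
  obtain C where "finite C" "card C \<le> 1" and removal: "0 \<le> Delta_alloc V i j (\<lambda>l. \<pi> l - C)"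
    using assms(1) unfolding EF1_towards_iff_removal[OF assms(2-4)] by blast
  then obtain c where C: "C \<subseteq> {c}"
    by (metis card_0_eq card_1_singletonE empty_subsetI le_Suc_eq One_nat_def le_zero_eq order_refl)
  note removal
  also have "Delta_alloc V i j (\<lambda>l. \<pi> l - C) \<le> Delta_set V i j (\<pi> i) - Delta_set V i j (\<pi> j - {c})"
    unfolding Delta_alloc_def Delta_set_def using C assms(5-7)
    by (intro diff_mono sum_mono2) auto
  also have "\<dots> \<le> Delta_alloc V i j \<pi> + 1"
    using Delta_set_Diff_singleton_ge[OF assms(6), of V i j c] assms(7)
    by (force simp: Delta_alloc_def)
  finally show ?thesis by simp
qed

lemma EF1_towards_if_Delta_alloc_ge_minus_one:
  assumes "finite N" "i \<in> N" "j \<in> N" "\<pi> i \<inter> \<pi> j = {}" "finite (\<pi> i)" "finite (\<pi> j)"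
    and binary: "\<forall>b\<in>\<pi> i \<union> \<pi> j. Delta_item V i j b \<in> {0, 1}"
    and "-1 \<le> Delta_alloc V i j \<pi>"
  shows "EF1_towards N V \<pi> i j"
proof (cases "0 \<le> Delta_alloc V i j \<pi>")
  case True
  then show ?thesis using assms(1-3) by (rule EF1_towards_if_Delta_alloc_nonneg[rotated 3])
next
  case False
  have "0 \<le> Delta_set V i j (\<pi> i)"
    using binary unfolding Delta_set_def by (intro sum_nonneg) force
  with False have "Delta_set V i j (\<pi> j) \<noteq> 0" by (auto simp: Delta_alloc_def)
  then obtain c where c: "c \<in> \<pi> j" "Delta_item V i j c = 1"
    using binary unfolding Delta_set_def
    by (metis sum.not_neutral_contains_not_neutral insertE singletonD UnCI)
  moreover have "c \<notin> \<pi> i" using assms(4) c(1) by auto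
  ultimately have "Delta_alloc V i j (\<lambda>l. \<pi> l - {c}) = Delta_alloc V i j \<pi> + 1"
    using assms(6) by (simp add: Delta_alloc_def Delta_set_def sum.remove)
  with assms(8) show ?thesis
    unfolding EF1_towards_iff_removal[OF assms(1-3)] by (intro exI[of _ "{c}"]) simp
qed

lemma EF1_iff_Delta_alloc_ge_minus_one:
  assumes "finite N" "finite B" "is_allocation N B \<pi>"
    and binary: "\<forall>i\<in>N. \<forall>j\<in>N. \<forall>b\<in>B. Delta_item V i j b \<in> {0, 1}"
  shows "EF1 N V \<pi> \<longleftrightarrow> (\<forall>i\<in>N. \<forall>j\<in>N. i \<noteq> j \<longrightarrow> -1 \<le> Delta_alloc V i j \<pi>)"
proof -
  have sub: "\<pi> i \<subseteq> B" if "i \<in> N" for i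
    using assms(3) that unfolding is_allocation_def by blast
  have fin: "finite (\<pi> i)" if "i \<in> N" for i
    using finite_subset[OF sub[OF that] assms(2)] .
  have pair_binary: "\<forall>b\<in>\<pi> i \<union> \<pi> j. Delta_item V i j b \<in> {0, 1}" if "i \<in> N" "j \<in> N" for i j
    using binary sub that by blast
  show ?thesis
    unfolding EF1_iff_EF1_towards
  proof (intro iffI ballI impI)
    fix i j assume "\<forall>i\<in>N. \<forall>j\<in>N. EF1_towards N V \<pi> i j" and ij: "i \<in> N" "j \<in> N"
    moreover have "\<forall>b\<in>\<pi> i \<union> \<pi> j. 0 \<le> Delta_item V i j b \<and> Delta_item V i j b \<le> 1"
      using pair_binary[OF ij] by force
    ultimately show "-1 \<le> Delta_alloc V i j \<pi>"
      using assms(1) fin by (intro Delta_alloc_ge_minus_one_if_EF1_towards) auto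
  next
    fix i j assume ge: "\<forall>i\<in>N. \<forall>j\<in>N. i \<noteq> j \<longrightarrow> -1 \<le> Delta_alloc V i j \<pi>" and ij: "i \<in> N" "j \<in> N"
    show "EF1_towards N V \<pi> i j"
    proof (cases "i = j")
      case True
      then show ?thesis
        using assms(1) ij by (intro EF1_towards_if_Delta_alloc_nonneg) (auto simp: Delta_alloc_def)
    next
      case False
      then show ?thesis
        using assms(1,3) ij fin pair_binary ge
        by (intro EF1_towards_if_Delta_alloc_ge_minus_one) (auto simp: is_allocation_def)
    qed
  qed
qed

lemma is_complete_allocation_insert:
  assumes "is_complete_allocation N A \<pi>" "t \<in> N" "a \<notin> A"
  shows "is_complete_allocation N (insert a A) (\<pi>(t := insert a (\<pi> t)))"
  using assms unfolding is_complete_allocation_def is_allocation_def by auto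

lemma Delta_alloc_give_item_receiver:
  assumes "finite (\<pi> t)" "a \<notin> \<pi> t" "l \<noteq> t"
  shows "Delta_alloc V t l (\<pi>(t := insert a (\<pi> t))) = Delta_alloc V t l \<pi> + Delta_item V t l a"
  using assms by (simp add: Delta_alloc_def Delta_set_def)

lemma Delta_alloc_give_item_towards_receiver:
  assumes "finite (\<pi> t)" "a \<notin> \<pi> t" "k \<noteq> t"
  shows "Delta_alloc V k t (\<pi>(t := insert a (\<pi> t))) = Delta_alloc V k t \<pi> - Delta_item V k t a"
  using assms by (simp add: Delta_alloc_def Delta_set_def)

lemma Delta_alloc_give_item_bystanders:
  assumes "k \<noteq> t" "l \<noteq> t"
  shows "Delta_alloc V k l (\<pi>(t := insert a (\<pi> t))) = Delta_alloc V k l \<pi>"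
  using assms by (simp add: Delta_alloc_def)

lemma ex_no_predecessor_if_card_le_3:
  assumes "finite N" "card N \<le> 3" "i\<^sub>0 \<in> N"
    and sink: "\<forall>t\<in>N. \<not> R i\<^sub>0 t"
    and asym: "\<forall>k\<in>N. \<forall>t\<in>N. R k t \<longrightarrow> \<not> R t k"
  shows "\<exists>t\<in>N. \<forall>k\<in>N. \<not> R k t"
proof (rule ccontr)
  assume "\<not> ?thesis"
  then have pred: "\<exists>k\<in>N. R k t" if "t \<in> N" for t
    using that by blast
  obtain k where k: "k \<in> N" "R k i\<^sub>0" using pred[OF assms(3)] by blast
  obtain m where m: "m \<in> N" "R m k" using pred[OF k(1)] by blast
  obtain p where p: "p \<in> N" "R p m" using pred[OF m(1)] by blast
  have "distinct [i\<^sub>0, k, m, p]"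
    using k m p sink asym assms(3) by auto
  then have "card {i\<^sub>0, k, m, p} = 4" by simp
  moreover have "card {i\<^sub>0, k, m, p} \<le> card N"
    using k m p assms(1,3) by (intro card_mono) auto
  ultimately show False using assms(2) by simp
qed

lemma ex_unobjected_recipient:
  assumes "finite N" "card N \<le> 3" "i\<^sub>0 \<in> N" "\<forall>j\<in>N. Delta_item V i\<^sub>0 j a = 0"
    and binary: "\<forall>k\<in>N. \<forall>t\<in>N. Delta_item V k t a \<in> {0, 1}"
    and cond: "\<forall>i\<in>N. \<forall>j\<in>N. Delta_alloc V i j \<pi> = -1 \<longrightarrow> 0 \<le> Delta_alloc V j i \<pi>"
  shows "\<exists>t\<in>N. \<forall>k\<in>N. k \<noteq> t \<longrightarrow> Delta_alloc V k t \<pi> = -1 \<longrightarrow> Delta_item V k t a = 0"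
proof -
  define objects where
    "objects k t \<longleftrightarrow> k \<noteq> t \<and> Delta_alloc V k t \<pi> = -1 \<and> Delta_item V k t a = 1" for k t
  have "\<forall>t\<in>N. \<not> objects i\<^sub>0 t"
    using assms(4) by (simp add: objects_def)
  moreover have "\<forall>k\<in>N. \<forall>t\<in>N. objects k t \<longrightarrow> \<not> objects t k"
  proof (intro ballI impI notI)
    fix k t assume kt: "k \<in> N" "t \<in> N" and "objects k t" "objects t k"
    then show False using cond[rule_format, OF kt] by (simp add: objects_def)
  qed
  ultimately obtain t where t: "t \<in> N" "\<forall>k\<in>N. \<not> objects k t"
    using ex_no_predecessor_if_card_le_3[OF assms(1-3)] by blast
  have "Delta_item V k t a = 0" if "k \<in> N" "k \<noteq> t" "Delta_alloc V k t \<pi> = -1" for k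
    using that t binary[rule_format, OF that(1) t(1)] by (auto simp: objects_def)
  with t(1) show ?thesis by blast
qed

lemma Delta_alloc_give_item_ge_minus_one:
  assumes "finite (\<pi> t)" "a \<notin> \<pi> t" "k \<noteq> l"
    and before: "-1 \<le> Delta_alloc V k l \<pi>"
    and item_binary: "Delta_item V k l a \<in> {0, 1}"
    and ints: "\<forall>b\<in>\<pi> k \<union> \<pi> l. Delta_item V k l b \<in> \<int>"
    and no_objection: "l = t \<Longrightarrow> Delta_alloc V k l \<pi> = -1 \<Longrightarrow> Delta_item V k l a = 0"
  shows "-1 \<le> Delta_alloc V k l (\<pi>(t := insert a (\<pi> t)))"
proof -
  consider "k = t" | "l = t" | "k \<noteq> t" "l \<noteq> t" by blast
  then show ?thesis
  proof cases
    case 1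
    then show ?thesis
      using assms(1-3) before item_binary by (auto simp: Delta_alloc_give_item_receiver)
  next
    case 2
    have "0 \<le> Delta_alloc V k l \<pi>" if "Delta_item V k l a = 1"
      using ints before no_objection[OF 2] that
      by (intro Delta_alloc_nonneg_if_gt_minus_one) force+
    then show ?thesis
      using assms(1-3) before item_binary 2 by (auto simp: Delta_alloc_give_item_towards_receiver)
  next
    case 3
    then show ?thesis using before by (simp add: Delta_alloc_give_item_bystanders)
  qed
qed

lemma EF1_give_new_item:
  assumes "finite N" "finite A" "is_complete_allocation N A \<pi>" "a \<notin> A" "t \<in> N"
    and binary: "\<forall>i\<in>N. \<forall>j\<in>N. \<forall>b\<in>insert a A. Delta_item V i j b \<in> {0, 1}"
    and "EF1 N V \<pi>"
    and no_objection: "\<forall>k\<in>N. k \<noteq> t \<longrightarrow> Delta_alloc V k t \<pi> = -1 \<longrightarrow> Delta_item V k t a = 0"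
  shows "EF1 N V (\<pi>(t := insert a (\<pi> t)))"
proof -
  have sub: "\<pi> i \<subseteq> A" if "i \<in> N" for i
    using assms(3) that unfolding is_complete_allocation_def is_allocation_def by blast
  have alloc: "is_allocation N (insert a A) \<pi>"
    using assms(3) sub by (auto simp: is_complete_allocation_def is_allocation_def)
  have alloc': "is_allocation N (insert a A) (\<pi>(t := insert a (\<pi> t)))"
    using is_complete_allocation_insert[OF assms(3,5,4)] by (simp add: is_complete_allocation_def)
  note EF1_iff = EF1_iff_Delta_alloc_ge_minus_one[OF assms(1) finite_insert[THEN iffD2, OF assms(2)] _ binary]
  have bundle_t: "finite (\<pi> t)" "a \<notin> \<pi> t"
    using finite_subset[OF sub assms(2)] sub assms(4,5) by auto
  show ?thesis
    unfolding EF1_iff[OF alloc']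
  proof (intro ballI impI)
    fix k l assume kl: "k \<in> N" "l \<in> N" "k \<noteq> l"
    show "-1 \<le> Delta_alloc V k l (\<pi>(t := insert a (\<pi> t)))"
    proof (rule Delta_alloc_give_item_ge_minus_one[where \<pi> = \<pi>, OF bundle_t kl(3)])
      show "-1 \<le> Delta_alloc V k l \<pi>"
        using assms(7) kl EF1_iff[OF alloc] by blast
      show "Delta_item V k l a \<in> {0, 1}" "\<forall>b\<in>\<pi> k \<union> \<pi> l. Delta_item V k l b \<in> \<int>"
        using binary sub kl by force+
      show "Delta_item V k l a = 0" if "l = t" "Delta_alloc V k l \<pi> = -1"
        using no_objection kl that by blast
    qed
  qed
qed

theorem lemma6:
  fixes A :: "'a set" and V :: "nat \<Rightarrow> nat \<Rightarrow> 'a \<Rightarrow> real"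
    and \<pi> :: "nat \<Rightarrow> 'a set" and a :: 'a
  assumes finA: "finite A"
    and binary: "\<forall>i\<in>{1,2,3}. \<forall>j\<in>{1,2,3}. \<forall>b\<in>insert a A. V i j b \<in> {0, 1}"
    and nochore: "\<forall>i\<in>{1,2,3}. \<forall>j\<in>{1,2,3}. \<forall>b\<in>insert a A. V i i b \<ge> V i j b"
    and compl: "is_complete_allocation {1,2,3} A \<pi>"
    and ef1: "EF1 {1,2,3} V \<pi>"
    and cond: "\<forall>i\<in>{1,2,3}. \<forall>j\<in>{1,2,3}.
                 Delta_alloc V i j \<pi> = -1 \<longrightarrow> Delta_alloc V j i \<pi> \<ge> 0"
    and new: "a \<notin> A"
    and zero: "\<exists>i\<in>{1,2,3}. \<forall>j\<in>{1,2,3}. Delta_item V i j a = 0"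
  shows "\<exists>\<pi>'. is_complete_allocation {1,2,3} (insert a A) \<pi>' \<and> EF1 {1,2,3} V \<pi>'"
proof -
  let ?N = "{1, 2, 3} :: nat set"
  have binary_Delta: "\<forall>i\<in>?N. \<forall>j\<in>?N. \<forall>b\<in>insert a A. Delta_item V i j b \<in> {0, 1}"
    by (rule Delta_item_binary_if_binary_no_chore[OF binary nochore])
  obtain i\<^sub>0 where i\<^sub>0: "i\<^sub>0 \<in> ?N" "\<forall>j\<in>?N. Delta_item V i\<^sub>0 j a = 0"
    using zero by blast
  have "\<forall>k\<in>?N. \<forall>t\<in>?N. Delta_item V k t a \<in> {0, 1}"
    using binary_Delta by blast
  then obtain t where "t \<in> ?N"
    and no_objection: "\<forall>k\<in>?N. k \<noteq> t \<longrightarrow> Delta_alloc V k t \<pi> = -1 \<longrightarrow> Delta_item V k t a = 0"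
    using ex_unobjected_recipient[OF _ _ i\<^sub>0 _ cond] by fastforce
  have "EF1 ?N V (\<pi>(t := insert a (\<pi> t)))"
    using EF1_give_new_item[OF _ finA compl new \<open>t \<in> ?N\<close> binary_Delta ef1 no_objection] by simp
  then show ?thesis
    using is_complete_allocation_insert[OF compl \<open>t \<in> ?N\<close> new] by blast
qed

end
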